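(* Every semi-arc visibility graph is planar.
   Context: An arc visibility representation is a finite collection of pairwise disjoint circular arcs, all concentric (centered at a common point $O$). A line of sight is a radial line segment, i.e. a segment contained in a line through $O$ (it may pass through $O$). The arc visibility graph has one vertex per arc, with two vertices adjacent when the two corresponding arcs are joined by a line of sight (having its endpoints on the two arcs) that intersects no other arc. A semi-arc visibility representation is an arc visibility representation in which every arc starts on one common radial ray from $O$ and extends counterclockwise from it; the corresponding graph is a semi-arc visibility graph. *)

theory Defs
  imports "HOL-Analysis.Analysis"
begin

text \<open>The common centre O is the origin of the complex plane (= R^2).\<close>
definition circ_arc :: "real \<Rightarrow> real \<Rightarrow> real \<Rightarrow> complex set" where
  "circ_arc r a l = {complex_of_real r * cis t | t. a \<le> t \<and> t \<le> a + l}"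

definition radial_segment :: "complex \<Rightarrow> complex \<Rightarrow> bool" where
  "radial_segment p q \<longleftrightarrow>
     (\<exists>u. u \<noteq> 0 \<and> closed_segment p q \<subseteq> {complex_of_real t * u | t. True})"

definition arc_vis_rep :: "'v set \<Rightarrow> ('v \<Rightarrow> real) \<Rightarrow> ('v \<Rightarrow> real) \<Rightarrow> ('v \<Rightarrow> real) \<Rightarrow> bool" where
  "arc_vis_rep V r a l \<longleftrightarrow> finite V \<and>
     (\<forall>i\<in>V. 0 < r i \<and> 0 < l i \<and> l i < 2 * pi) \<and>
     (\<forall>i\<in>V. \<forall>j\<in>V. i \<noteq> j \<longrightarrow> circ_arc (r i) (a i) (l i) \<inter> circ_arc (r j) (a j) (l j) = {})"

definition semi_arc_vis_rep :: "'v set \<Rightarrow> ('v \<Rightarrow> real) \<Rightarrow> ('v \<Rightarrow> real) \<Rightarrow> bool" where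
  "semi_arc_vis_rep V r l \<longleftrightarrow> arc_vis_rep V r (\<lambda>_. 0) l"

definition arc_vis_edges :: "'v set \<Rightarrow> ('v \<Rightarrow> real) \<Rightarrow> ('v \<Rightarrow> real) \<Rightarrow> ('v \<Rightarrow> real) \<Rightarrow> 'v set set" where
  "arc_vis_edges V r a l = {{i, j} | i j. i \<in> V \<and> j \<in> V \<and> i \<noteq> j \<and>
     (\<exists>p q. p \<in> circ_arc (r i) (a i) (l i) \<and> q \<in> circ_arc (r j) (a j) (l j) \<and>
        radial_segment p q \<and>
        (\<forall>k\<in>V - {i, j}. closed_segment p q \<inter> circ_arc (r k) (a k) (l k) = {}))}"

definition planar_graph :: "'v set \<Rightarrow> 'v set set \<Rightarrow> bool" where
  "planar_graph V E \<longleftrightarrow>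
     (\<exists>(pos :: 'v \<Rightarrow> complex) (\<gamma> :: 'v set \<Rightarrow> real \<Rightarrow> complex).
        inj_on pos V \<and>
        (\<forall>e\<in>E. \<exists>u v. e = {u, v} \<and> u \<noteq> v \<and> u \<in> V \<and> v \<in> V \<and>
            arc (\<gamma> e) \<and> pathstart (\<gamma> e) = pos u \<and> pathfinish (\<gamma> e) = pos v \<and>
            path_image (\<gamma> e) \<inter> pos ` V = {pos u, pos v}) \<and>
        (\<forall>e\<in>E. \<forall>e'\<in>E. e \<noteq> e' \<longrightarrow>
            path_image (\<gamma> e) \<inter> path_image (\<gamma> e') \<subseteq> pos ` (e \<inter> e')))"

end

theory Submission
  imports Defs
begin

text \<open>
  Put the vertices on the real axis and draw every edge as a parabolic arch in the upper or the
  lower half-plane; this is a planar drawing as soon as no two edges in the same half-plane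
  interleave. A line of sight between semi-arcs either lies on one ray from O or passes through O,
  and in both cases the arcs it crosses radially must end before the angles it uses. Let L be the
  largest arc length and c the innermost arc of length at least L - pi, so that every arc inside c
  is shorter than L - pi. Then a line of sight avoiding c lies on a ray only if its two ends are on
  the same side of c, and passes through O only from the inside of c to the outside. Order the
  vertices inside c by increasing radius, then c, then the vertices outside c by decreasing radius,
  and draw the edges at c below the axis and all others above it: two interleaved edges avoiding c
  would produce two arcs each strictly shorter than the other.
\<close>

definition arch_height :: "bool \<Rightarrow> real \<Rightarrow> real \<Rightarrow> real \<Rightarrow> real" where
  "arch_height up a b x = (if up then 1 else -1) * ((x - a) * (b - x))"

definition arch :: "bool \<Rightarrow> real \<Rightarrow> real \<Rightarrow> real \<Rightarrow> complex" where
  "arch up a b t = Complex (a + t * (b - a)) (arch_height up a b (a + t * (b - a)))"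

lemma arc_arch:
  assumes "a < b"
  shows "arc (arch up a b)"
  unfolding arc_def path_def
proof
  show "continuous_on {0..1} (arch up a b)"
    unfolding arch_def arch_height_def Complex_eq by (intro continuous_intros)
  show "inj_on (arch up a b) {0..1}"
    using assms by (intro inj_onI) (auto simp: arch_def complex_eq_iff)
qed

lemma pathstart_arch [simp]: "pathstart (arch up a b) = complex_of_real a"
  by (simp add: pathstart_def arch_def arch_height_def complex_eq_iff)

lemma pathfinish_arch [simp]: "pathfinish (arch up a b) = complex_of_real b"
  by (simp add: pathfinish_def arch_def arch_height_def complex_eq_iff)

lemma path_image_arch:
  assumes "a < b"
  shows "path_image (arch up a b) = {z. a \<le> Re z \<and> Re z \<le> b \<and> Im z = arch_height up a b (Re z)}"
proof (intro set_eqI iffI)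
  fix z assume "z \<in> path_image (arch up a b)"
  then obtain t where "0 \<le> t" "t \<le> 1" "z = arch up a b t"
    by (auto simp: path_image_def)
  moreover have "0 \<le> t * (b - a)" "t * (b - a) \<le> b - a"
    using \<open>0 \<le> t\<close> \<open>t \<le> 1\<close> assms by (simp_all add: mult_left_le_one_le)
  ultimately show "z \<in> {z. a \<le> Re z \<and> Re z \<le> b \<and> Im z = arch_height up a b (Re z)}"
    by (simp add: arch_def)
next
  fix z assume z: "z \<in> {z. a \<le> Re z \<and> Re z \<le> b \<and> Im z = arch_height up a b (Re z)}"
  define t where "t = (Re z - a) / (b - a)"
  have "0 \<le> t" "t \<le> 1"
    using z assms by (auto simp: t_def divide_simps)
  moreover have "arch up a b t = z"
    using z assms by (simp add: arch_def t_def complex_eq_iff)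
  ultimately show "z \<in> path_image (arch up a b)"
    by (auto simp: path_image_def)
qed

lemma arch_height_eq_0_iff: "arch_height up a b x = 0 \<longleftrightarrow> x = a \<or> x = b"
  by (auto simp: arch_height_def)

lemma arch_height_pos_iff:
  assumes "a < x" "x < b"
  shows "0 < arch_height up a b x \<longleftrightarrow> up"
proof -
  have "0 < (x - a) * (b - x)"
    using assms by simp
  then show ?thesis
    by (simp add: arch_height_def)
qed

lemma nested_product_less:
  fixes a b a' b' x :: real
  assumes "a \<le> a'" "a' < x" "x < b'" "b' \<le> b" "(a, b) \<noteq> (a', b')"
  shows "(x - a') * (b' - x) < (x - a) * (b - x)"
proof (cases "a < a'")
  case True
  then show ?thesis
    using assms by (intro mult_less_le_imp_less) auto
next
  case False
  then show ?thesis
    using assms by (intro mult_le_less_imp_less) auto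
qed

lemma arch_heights_distinct:
  assumes "a < x" "x < b" "a' < x" "x < b'" "(a, b) \<noteq> (a', b')"
    and "\<not> (a < a' \<and> a' < b \<and> b < b')" "\<not> (a' < a \<and> a < b' \<and> b' < b)"
  shows "arch_height up a b x \<noteq> arch_height up a' b' x"
proof -
  consider "a \<le> a'" "b' \<le> b" | "a' \<le> a" "b \<le> b'"
    using assms by linarith
  then have "(x - a') * (b' - x) \<noteq> (x - a) * (b - x)"
    using nested_product_less[of a a' x b' b] nested_product_less[of a' a x b b'] assms
    by cases (auto simp: eq_commute)
  then show ?thesis
    by (simp add: arch_height_def)
qed

lemma arches_meet_on_axis:
  assumes "a < b" "a' < b'" "(a, b) \<noteq> (a', b')"
    and not_interleaved: "up = up' \<Longrightarrow> \<not> (a < a' \<and> a' < b \<and> b < b') \<and> \<not> (a' < a \<and> a < b' \<and> b' < b)"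
    and z: "z \<in> path_image (arch up a b)" "z \<in> path_image (arch up' a' b')"
  shows "z \<in> complex_of_real ` ({a, b} \<inter> {a', b'})"
proof -
  have on_arch: "a \<le> Re z" "Re z \<le> b" "Im z = arch_height up a b (Re z)"
      and on_arch': "a' \<le> Re z" "Re z \<le> b'" "Im z = arch_height up' a' b' (Re z)"
    using z assms(1,2) by (auto simp: path_image_arch)
  have "Im z = 0"
  proof (rule ccontr)
    assume "Im z \<noteq> 0"
    then have interior: "a < Re z" "Re z < b" "a' < Re z" "Re z < b'"
      using on_arch on_arch' arch_height_eq_0_iff by (metis order.not_eq_order_implies_strict)+
    then have "up = up'"
      using on_arch(3) on_arch'(3) arch_height_pos_iff by metis
    moreover from this have "\<not> (a < a' \<and> a' < b \<and> b < b')" "\<not> (a' < a \<and> a < b' \<and> b' < b)"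
      using not_interleaved by auto
    then have "arch_height up a b (Re z) \<noteq> arch_height up a' b' (Re z)"
      by (rule arch_heights_distinct[OF interior assms(3)])
    ultimately show False
      using on_arch(3) on_arch'(3) by simp
  qed
  then have "arch_height up a b (Re z) = 0" "arch_height up' a' b' (Re z) = 0"
    using on_arch(3) on_arch'(3) by simp_all
  then have "Re z \<in> {a, b} \<inter> {a', b'}"
    unfolding arch_height_eq_0_iff by blast
  moreover have "z = complex_of_real (Re z)"
    using \<open>Im z = 0\<close> by (simp add: complex_eq_iff)
  ultimately show ?thesis
    by blast
qed

definition interleaved :: "('v \<Rightarrow> real) \<Rightarrow> 'v set \<Rightarrow> 'v set \<Rightarrow> bool" where
  "interleaved pos e e' \<longleftrightarrow>
     (\<exists>a b a' b'. e = {a, b} \<and> e' = {a', b'} \<and> pos a < pos a' \<and> pos a' < pos b \<and> pos b < pos b')"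

lemma interleaved_disjoint: "interleaved pos e e' \<Longrightarrow> e \<inter> e' = {}"
  unfolding interleaved_def by force

definition book_arch :: "('v \<Rightarrow> real) \<Rightarrow> ('v set \<Rightarrow> bool) \<Rightarrow> 'v set \<Rightarrow> real \<Rightarrow> complex" where
  "book_arch pos page e = arch (page e) (Min (pos ` e)) (Max (pos ` e))"

lemma book_arch_doubleton:
  "pos u < pos v \<Longrightarrow> book_arch pos page {u, v} = arch (page {u, v}) (pos u) (pos v)"
  by (simp add: book_arch_def)

lemma doubleton_ordered:
  fixes pos :: "'v \<Rightarrow> real"
  assumes "inj_on pos V" "e = {u, v}" "u \<noteq> v" "u \<in> V" "v \<in> V"
  obtains a b where "e = {a, b}" "a \<in> V" "b \<in> V" "pos a < pos b"
  using assms by (metis inj_on_eq_iff insert_commute linorder_neqE_linordered_idom)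

lemma book_arch_vertices:
  assumes inj: "inj_on pos V" and uv: "u \<in> V" "v \<in> V" "pos u < pos v"
  shows "path_image (book_arch pos page {u, v}) \<inter> (\<lambda>k. complex_of_real (pos k)) ` V =
    {complex_of_real (pos u), complex_of_real (pos v)}"
    (is "path_image ?\<gamma> \<inter> ?P ` V = _")
proof
  show "path_image ?\<gamma> \<inter> ?P ` V \<subseteq> {?P u, ?P v}"
  proof
    fix z assume "z \<in> path_image ?\<gamma> \<inter> ?P ` V"
    then obtain k where "k \<in> V" "z = ?P k" "arch_height (page {u, v}) (pos u) (pos v) (pos k) = 0"
      using uv by (auto simp: book_arch_doubleton path_image_arch)
    then show "z \<in> {?P u, ?P v}"
      using inj uv by (auto simp: arch_height_eq_0_iff inj_on_eq_iff)
  qed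
  show "{?P u, ?P v} \<subseteq> path_image ?\<gamma> \<inter> ?P ` V"
    using uv pathstart_in_path_image[of ?\<gamma>] pathfinish_in_path_image[of ?\<gamma>]
    by (simp add: book_arch_doubleton)
qed

lemma book_arches_intersection:
  assumes inj: "inj_on pos V"
    and uv: "u \<in> V" "v \<in> V" "pos u < pos v" and uv': "u' \<in> V" "v' \<in> V" "pos u' < pos v'"
    and distinct: "{u, v} \<noteq> {u', v'}"
    and same_page: "page {u, v} = page {u', v'} \<Longrightarrow>
      \<not> interleaved pos {u, v} {u', v'} \<and> \<not> interleaved pos {u', v'} {u, v}"
  shows "path_image (book_arch pos page {u, v}) \<inter> path_image (book_arch pos page {u', v'})
    \<subseteq> (\<lambda>k. complex_of_real (pos k)) ` ({u, v} \<inter> {u', v'})"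
proof
  fix z assume z: "z \<in> path_image (book_arch pos page {u, v}) \<inter> path_image (book_arch pos page {u', v'})"
  have "(pos u, pos v) \<noteq> (pos u', pos v')"
    using inj uv uv' distinct by (auto simp: inj_on_eq_iff)
  moreover have "\<not> (pos u < pos u' \<and> pos u' < pos v \<and> pos v < pos v') \<and>
      \<not> (pos u' < pos u \<and> pos u < pos v' \<and> pos v' < pos v)" if "page {u, v} = page {u', v'}"
    using same_page[OF that] unfolding interleaved_def by blast
  ultimately have "z \<in> complex_of_real ` ({pos u, pos v} \<inter> {pos u', pos v'})"
    using z uv(3) uv'(3)
    by (intro arches_meet_on_axis[where up = "page {u, v}" and up' = "page {u', v'}"])
       (auto simp: book_arch_doubleton)
  then show "z \<in> (\<lambda>k. complex_of_real (pos k)) ` ({u, v} \<inter> {u', v'})"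
    using inj uv uv' by (auto simp: inj_on_eq_iff)
qed

lemma planar_graph_two_page_book:
  fixes pos :: "'v \<Rightarrow> real" and page :: "'v set \<Rightarrow> bool"
  assumes inj: "inj_on pos V"
    and edges: "\<And>e. e \<in> E \<Longrightarrow> \<exists>u v. e = {u, v} \<and> u \<noteq> v \<and> u \<in> V \<and> v \<in> V"
    and pages: "\<And>e e'. e \<in> E \<Longrightarrow> e' \<in> E \<Longrightarrow> page e = page e' \<Longrightarrow> \<not> interleaved pos e e'"
  shows "planar_graph V E"
proof -
  have ordered: "\<exists>u v. e = {u, v} \<and> u \<in> V \<and> v \<in> V \<and> pos u < pos v" if "e \<in> E" for e
    using edges[OF that] doubleton_ordered[OF inj] by metis
  have "\<exists>u v. e = {u, v} \<and> u \<noteq> v \<and> u \<in> V \<and> v \<in> V \<and> arc (book_arch pos page e) \<and>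
      pathstart (book_arch pos page e) = complex_of_real (pos u) \<and>
      pathfinish (book_arch pos page e) = complex_of_real (pos v) \<and>
      path_image (book_arch pos page e) \<inter> (\<lambda>k. complex_of_real (pos k)) ` V =
        {complex_of_real (pos u), complex_of_real (pos v)}" if "e \<in> E" for e
    using ordered[OF that] book_arch_vertices[OF inj]
    by (fastforce simp: book_arch_doubleton arc_arch)
  moreover have "path_image (book_arch pos page e) \<inter> path_image (book_arch pos page e')
      \<subseteq> (\<lambda>k. complex_of_real (pos k)) ` (e \<inter> e')" if "e \<in> E" "e' \<in> E" "e \<noteq> e'" for e e'
    using ordered[OF that(1)] ordered[OF that(2)] that pages book_arches_intersection[OF inj] by metis
  ultimately show ?thesis
    unfolding planar_graph_def using inj
    by (intro exI[of _ "\<lambda>k. complex_of_real (pos k)"] exI[of _ "book_arch pos page"] conjI ballI impI)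
       (auto simp: inj_on_def)
qed

lemma Arg2pi_of_real_cis:
  assumes "0 < R" "0 \<le> s" "s < 2 * pi"
  shows "Arg2pi (complex_of_real R * cis s) = s"
  using assms by (intro Arg2pi_unique) (auto simp: cis_conv_exp)

lemma collinear_polar_angles:
  assumes R: "0 < R" "0 < R'" and s: "0 \<le> s" "s < 2 * pi" and t: "0 \<le> t" "t < 2 * pi"
    and collinear: "complex_of_real R' * cis t = complex_of_real \<kappa> * (complex_of_real R * cis s)"
  shows "t = s \<or> t = s + pi \<or> s = t + pi"
proof -
  have \<kappa>: "\<kappa> \<noteq> 0"
    using collinear R by auto
  have t_Arg: "t = Arg2pi (complex_of_real \<kappa> * (complex_of_real R * cis s))"
    using collinear Arg2pi_of_real_cis[OF R(2) t] by simp
  show ?thesis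
  proof (cases "0 < \<kappa>")
    case True
    then show ?thesis
      using t_Arg Arg2pi_of_real_cis[OF R(1) s] by simp
  next
    case False
    then have "complex_of_real \<kappa> * (complex_of_real R * cis s) =
        complex_of_real (- \<kappa>) * - (complex_of_real R * cis s)"
      by simp
    moreover have "0 < - \<kappa>"
      using False \<kappa> by simp
    ultimately have "t = Arg2pi (- (complex_of_real R * cis s))"
      using t_Arg Arg2pi_times_of_real by metis
    then show ?thesis
      using R(1) by (simp add: Arg2pi_minus Arg2pi_of_real_cis[OF R(1) s] split: if_splits)
  qed
qed

lemma circ_arc_memI:
  assumes "a \<le> s" "s \<le> a + L"
  shows "complex_of_real R * cis s \<in> circ_arc R a L"
  using assms by (auto simp: circ_arc_def)

lemma of_real_mult_in_closed_segment:
  fixes w :: complex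
  assumes "min a b \<le> c" "c \<le> max a b"
  shows "complex_of_real c * w \<in> closed_segment (complex_of_real a * w) (complex_of_real b * w)"
proof -
  have "linear (\<lambda>x::real. complex_of_real x * w)"
    by (rule linearI) (auto simp: algebra_simps scaleR_conv_of_real)
  moreover have "c \<in> closed_segment a b"
    using assms by (auto simp: closed_segment_eq_real_ivl)
  ultimately show ?thesis
    using closed_segment_linear_image by blast
qed

lemma semi_arc_radii_inj:
  assumes "semi_arc_vis_rep V r l"
  shows "inj_on r V"
proof (rule inj_onI, rule ccontr)
  fix i j assume ij: "i \<in> V" "j \<in> V" "r i = r j" "i \<noteq> j"
  have "\<And>k. k \<in> V \<Longrightarrow> complex_of_real (r k) \<in> circ_arc (r k) 0 (l k)"
    using assms circ_arc_memI[of 0 0 "l _" "r _"]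
    by (fastforce simp: semi_arc_vis_rep_def arc_vis_rep_def)
  then have "complex_of_real (r i) \<in> circ_arc (r i) 0 (l i) \<inter> circ_arc (r j) 0 (l j)"
    using ij(1,2) by (metis IntI ij(3))
  moreover have "circ_arc (r i) 0 (l i) \<inter> circ_arc (r j) 0 (l j) = {}"
    using assms ij(1,2,4) by (simp add: semi_arc_vis_rep_def arc_vis_rep_def)
  ultimately show False
    by blast
qed

lemma radial_segment_collinear:
  assumes "radial_segment p q" "p \<noteq> 0"
  obtains \<kappa> where "q = complex_of_real \<kappa> * p"
proof -
  obtain u where "closed_segment p q \<subseteq> {complex_of_real t * u | t. True}"
    using assms(1) by (auto simp: radial_segment_def)
  then obtain \<alpha> \<beta> where "p = complex_of_real \<alpha> * u" "q = complex_of_real \<beta> * u"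
    using ends_in_segment by blast
  with assms(2) have "q = complex_of_real (\<beta> / \<alpha>) * p"
    by (simp add: field_simps)
  then show thesis ..
qed

text \<open>What a line of sight at angle \<open>s\<close> says about arc lengths: along a ray it joins arcs \<open>i\<close>
  and \<open>j\<close> at angle \<open>s\<close>; through O it leaves arc \<open>i\<close> at angle \<open>s\<close> and reaches arc \<open>j\<close> at angle
  \<open>s + pi\<close>. Every arc it crosses radially must end before the angle at which it is crossed.\<close>

definition ray_sightline :: "'v set \<Rightarrow> ('v \<Rightarrow> real) \<Rightarrow> ('v \<Rightarrow> real) \<Rightarrow> 'v \<Rightarrow> 'v \<Rightarrow> real \<Rightarrow> bool" where
  "ray_sightline V r l i j s \<longleftrightarrow> 0 \<le> s \<and> s \<le> l i \<and> s \<le> l j \<and>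
     (\<forall>k\<in>V - {i, j}. min (r i) (r j) < r k \<and> r k < max (r i) (r j) \<longrightarrow> l k < s)"

definition diameter_sightline :: "'v set \<Rightarrow> ('v \<Rightarrow> real) \<Rightarrow> ('v \<Rightarrow> real) \<Rightarrow> 'v \<Rightarrow> 'v \<Rightarrow> real \<Rightarrow> bool" where
  "diameter_sightline V r l i j s \<longleftrightarrow> 0 \<le> s \<and> s \<le> l i \<and> s + pi \<le> l j \<and>
     (\<forall>k\<in>V - {i, j}. (r k < r i \<longrightarrow> l k < s) \<and> (r k < r j \<longrightarrow> l k < s + pi))"

definition visible :: "'v set \<Rightarrow> ('v \<Rightarrow> real) \<Rightarrow> ('v \<Rightarrow> real) \<Rightarrow> 'v \<Rightarrow> 'v \<Rightarrow> bool" where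
  "visible V r l i j \<longleftrightarrow>
     (\<exists>s. ray_sightline V r l i j s \<or> diameter_sightline V r l i j s \<or> diameter_sightline V r l j i s)"

lemma ray_sightline_sym: "ray_sightline V r l i j s = ray_sightline V r l j i s"
  unfolding ray_sightline_def by (auto simp: insert_commute min.commute max.commute)

lemma visible_sym: "visible V r l i j = visible V r l j i"
  unfolding visible_def by (metis ray_sightline_sym)

lemma ray_sightlineI:
  assumes s: "0 \<le> s" "s \<le> l i" "s \<le> l j"
    and clear: "\<forall>k\<in>V - {i, j}. closed_segment (complex_of_real (r i) * cis s) (complex_of_real (r j) * cis s)
                   \<inter> circ_arc (r k) 0 (l k) = {}"
  shows "ray_sightline V r l i j s"
  unfolding ray_sightline_def
proof (intro conjI s ballI impI)
  fix k assume k: "k \<in> V - {i, j}" and between: "min (r i) (r j) < r k \<and> r k < max (r i) (r j)"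
  show "l k < s"
  proof (rule ccontr)
    assume "\<not> l k < s"
    then have "complex_of_real (r k) * cis s \<in> circ_arc (r k) 0 (l k)"
      using s by (intro circ_arc_memI) auto
    moreover have "complex_of_real (r k) * cis s
        \<in> closed_segment (complex_of_real (r i) * cis s) (complex_of_real (r j) * cis s)"
      using between by (intro of_real_mult_in_closed_segment) auto
    ultimately show False
      using clear k by blast
  qed
qed

lemma diameter_sightlineI:
  assumes pos: "\<forall>k\<in>V. 0 < r k" and ij: "i \<in> V" "j \<in> V"
    and s: "0 \<le> s" "s \<le> l i" "s + pi \<le> l j"
    and clear: "\<forall>k\<in>V - {i, j}. closed_segment (complex_of_real (r i) * cis s) (complex_of_real (r j) * cis (s + pi))
                   \<inter> circ_arc (r k) 0 (l k) = {}"
  shows "diameter_sightline V r l i j s"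
  unfolding diameter_sightline_def
proof (intro conjI s ballI impI)
  fix k assume k: "k \<in> V - {i, j}"
  have radii: "0 < r i" "0 < r j" "0 < r k"
    using pos ij k by auto
  have opposite: "complex_of_real x * cis (s + pi) = complex_of_real (- x) * cis s" for x
    by (simp flip: minus_cis)
  define seg where "seg = closed_segment (complex_of_real (r i) * cis s) (complex_of_real (- r j) * cis s)"
  have on_seg: "complex_of_real x * cis s \<in> seg" if "- r j \<le> x" "x \<le> r i" for x
    using that unfolding seg_def by (intro of_real_mult_in_closed_segment) auto
  have clear_k: "seg \<inter> circ_arc (r k) 0 (l k) = {}"
    using clear k opposite unfolding seg_def by metis
  show "l k < s" if "r k < r i"
  proof (rule ccontr)
    assume "\<not> l k < s"
    then have "complex_of_real (r k) * cis s \<in> circ_arc (r k) 0 (l k)"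
      using s by (intro circ_arc_memI) auto
    moreover have "complex_of_real (r k) * cis s \<in> seg"
      using radii that by (intro on_seg) auto
    ultimately show False
      using clear_k by blast
  qed
  show "l k < s + pi" if "r k < r j"
  proof (rule ccontr)
    assume "\<not> l k < s + pi"
    then have "complex_of_real (- r k) * cis s \<in> circ_arc (r k) 0 (l k)"
      using s opposite circ_arc_memI[of 0 "s + pi" "l k" "r k"] by auto
    moreover have "complex_of_real (- r k) * cis s \<in> seg"
      using radii that by (intro on_seg) auto
    ultimately show False
      using clear_k by blast
  qed
qed

lemma semi_arc_edge_visible:
  assumes rep: "semi_arc_vis_rep V r l" and e: "e \<in> arc_vis_edges V r (\<lambda>_. 0) l"
  obtains i j where "e = {i, j}" "i \<in> V" "j \<in> V" "i \<noteq> j" "visible V r l i j"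
proof -
  obtain i j p q where ij: "e = {i, j}" "i \<in> V" "j \<in> V" "i \<noteq> j"
    and p: "p \<in> circ_arc (r i) 0 (l i)" and q: "q \<in> circ_arc (r j) 0 (l j)"
    and rad: "radial_segment p q"
    and clear: "\<forall>k\<in>V - {i, j}. closed_segment p q \<inter> circ_arc (r k) 0 (l k) = {}"
    using e unfolding arc_vis_edges_def by blast
  have pos: "\<forall>k\<in>V. 0 < r k \<and> l k < 2 * pi"
    using rep by (auto simp: semi_arc_vis_rep_def arc_vis_rep_def)
  obtain s where s: "0 \<le> s" "s \<le> l i" "p = complex_of_real (r i) * cis s"
    using p by (auto simp: circ_arc_def)
  obtain t where t: "0 \<le> t" "t \<le> l j" "q = complex_of_real (r j) * cis t"
    using q by (auto simp: circ_arc_def)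
  obtain \<kappa> where "q = complex_of_real \<kappa> * p"
    using radial_segment_collinear[OF rad] s pos ij by force
  then have "t = s \<or> t = s + pi \<or> s = t + pi"
    using pos ij s t by (intro collinear_polar_angles[of "r i" "r j"]) auto
  moreover have "ray_sightline V r l i j s" if "t = s"
    using s t that clear by (intro ray_sightlineI) auto
  moreover have "diameter_sightline V r l i j s" if "t = s + pi"
    using s t that clear pos ij by (intro diameter_sightlineI) auto
  moreover have "diameter_sightline V r l j i t" if "s = t + pi"
    using s t that clear pos ij
    by (intro diameter_sightlineI) (auto simp: closed_segment_commute insert_commute)
  ultimately have "visible V r l i j"
    unfolding visible_def by blast
  with ij show thesis ..
qed

lemma ray_sightlines_not_interleaved:
  assumes "ray_sightline V r l i j s" "ray_sightline V r l i' j' s'" "i' \<in> V" "j \<in> V"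
    and "r i < r i'" "r i' < r j" "r j < r j'"
  shows False
proof -
  have "l i' < s" "s \<le> l j"
    using assms(1,3,5,6) unfolding ray_sightline_def by auto
  moreover have "l j < s'" "s' \<le> l i'"
    using assms(2,4,6,7) unfolding ray_sightline_def by auto
  ultimately show False
    by linarith
qed

lemma ray_diameter_sightlines_not_interleaved:
  assumes "ray_sightline V r l i j s" "diameter_sightline V r l i' j' s'" "i \<in> V" "i' \<in> V"
    and "r i < r i'" "r i' < r j" "i \<noteq> j'"
  shows False
proof -
  have "l i' < s" "s \<le> l i"
    using assms(1,4-6) unfolding ray_sightline_def by auto
  moreover have "l i < s'" "s' \<le> l i'"
    using assms(2,3,5,7) unfolding diameter_sightline_def by auto
  ultimately show False
    by linarith
qed

lemma diameter_ray_sightlines_not_interleaved: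
  assumes "diameter_sightline V r l i j s" "ray_sightline V r l i' j' s'" "j \<in> V" "j' \<in> V"
    and "r j' < r j" "r j < r i'" "i \<noteq> j'"
  shows False
proof -
  have "l j' < s + pi" "s + pi \<le> l j"
    using assms(1,4,5,7) unfolding diameter_sightline_def by auto
  moreover have "l j < s'" "s' \<le> l j'"
    using assms(2,3,5,6) unfolding ray_sightline_def by auto
  ultimately show False
    by linarith
qed

lemma diameter_sightlines_not_interleaved:
  assumes "diameter_sightline V r l i j s" "diameter_sightline V r l i' j' s'" "i \<in> V" "j' \<in> V"
    and "r i < r i'" "r j' < r j" "i \<noteq> j'"
  shows False
proof -
  have "l j' < s + pi" "s \<le> l i"
    using assms(1,4,6,7) unfolding diameter_sightline_def by auto
  moreover have "l i < s'" "s' + pi \<le> l j'"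
    using assms(2,3,5,7) unfolding diameter_sightline_def by auto
  ultimately show False
    by linarith
qed

locale semi_arc_pivot =
  fixes V :: "'v set" and r l :: "'v \<Rightarrow> real" and c :: 'v and L :: real
  assumes radii_inj: "inj_on r V"
    and length_le: "\<And>k. k \<in> V \<Longrightarrow> l k \<le> L"
    and max_length_less: "L < 2 * pi"
    and pivot_in: "c \<in> V"
    and pivot_long: "L - pi \<le> l c"
    and inside_pivot_short: "\<And>k. k \<in> V \<Longrightarrow> r k < r c \<Longrightarrow> l k < L - pi"
begin

lemma radius_neq_pivot: "k \<in> V \<Longrightarrow> k \<noteq> c \<Longrightarrow> r k < r c \<or> r c < r k"
  using radii_inj pivot_in by (metis inj_on_eq_iff linorder_neqE_linordered_idom)

lemma ray_sightline_same_side: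
  assumes "ray_sightline V r l i j s" "i \<in> V" "j \<in> V" "i \<noteq> c" "j \<noteq> c"
  shows "r i < r c \<longleftrightarrow> r j < r c"
proof (rule ccontr)
  assume "\<not> ?thesis"
  then have between: "min (r i) (r j) < r c" "r c < max (r i) (r j)"
    using radius_neq_pivot assms(2-5) by (auto simp: min_def max_def)
  then have "l c < s" "s \<le> l i" "s \<le> l j"
    using assms pivot_in unfolding ray_sightline_def by auto
  moreover have "l i < L - pi \<or> l j < L - pi"
    using inside_pivot_short assms(2,3) between by (auto simp: min_def split: if_splits)
  ultimately show False
    using pivot_long by linarith
qed

lemma diameter_sightline_crosses_pivot:
  assumes "diameter_sightline V r l i j s" "i \<in> V" "j \<in> V" "i \<noteq> c" "j \<noteq> c"
  shows "r i < r c \<and> r c < r j"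
proof -
  have s: "0 \<le> s" "s \<le> l i" "s + pi \<le> l j"
    using assms(1) unfolding diameter_sightline_def by auto
  have "\<not> r c < r i"
  proof
    assume "r c < r i"
    then have "l c < s"
      using assms pivot_in unfolding diameter_sightline_def by auto
    then show False
      using s length_le[OF assms(3)] pivot_long by linarith
  qed
  moreover have "\<not> r j < r c"
    using s inside_pivot_short[OF assms(3)] max_length_less by force
  ultimately show ?thesis
    using radius_neq_pivot assms(2-5) by blast
qed

text \<open>Vertices inside the pivot by increasing radius, then the pivot, then the vertices outside it
  by decreasing radius; \<open>exp (- r k)\<close> merely maps the outer radii decreasingly into \<open>(0, 1)\<close>.\<close>

definition book_pos :: "'v \<Rightarrow> real" where
  "book_pos k = (if r k \<le> r c then r k else r c + exp (- r k))"

lemma book_pos_less_iff: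
  "book_pos k < book_pos m \<longleftrightarrow>
     (r k \<le> r c \<and> r m \<le> r c \<and> r k < r m) \<or> (r c < r k \<and> r c < r m \<and> r m < r k) \<or>
     (r k \<le> r c \<and> r c < r m)"
  unfolding book_pos_def using exp_gt_zero[of "- r k"] exp_gt_zero[of "- r m"]
  by (auto simp del: exp_gt_zero)

lemma book_pos_less_inside:
  assumes "r m \<le> r c"
  shows "book_pos k < book_pos m \<longleftrightarrow> r k < r m"
  using assms book_pos_less_iff[of k m] by auto

lemma book_pos_less_outside:
  assumes "r c < r k"
  shows "book_pos k < book_pos m \<longleftrightarrow> r c < r m \<and> r m < r k"
  using assms book_pos_less_iff[of k m] by auto

lemma inj_on_book_pos: "inj_on book_pos V"
proof (rule inj_onI)
  fix k m assume "k \<in> V" "m \<in> V" "book_pos k = book_pos m"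
  then have "\<not> r k < r m" "\<not> r m < r k"
    using book_pos_less_iff[of k m] book_pos_less_iff[of m k] by auto
  then show "k = m"
    using radii_inj \<open>k \<in> V\<close> \<open>m \<in> V\<close> by (meson inj_onD linorder_neqE_linordered_idom)
qed

lemma visible_oriented:
  assumes "visible V r l i j" "i \<in> V" "j \<in> V" "i \<noteq> c" "j \<noteq> c" "book_pos i < book_pos j"
  obtains s where "ray_sightline V r l i j s \<or> diameter_sightline V r l i j s"
proof -
  obtain s where "ray_sightline V r l i j s \<or> diameter_sightline V r l i j s \<or> diameter_sightline V r l j i s"
    using assms(1) unfolding visible_def by blast
  moreover have "\<not> diameter_sightline V r l j i s"
    using diameter_sightline_crosses_pivot[of j i s] assms(2-6) book_pos_less_iff[of i j] by auto
  ultimately show thesis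
    using that by blast
qed

lemma no_interleaving_of_ray_sightlines:
  assumes ray: "ray_sightline V r l i j s" and ray': "ray_sightline V r l i' j' s'"
    and in_V: "i \<in> V" "j \<in> V" "i' \<in> V" "j' \<in> V"
    and not_pivot: "c \<notin> {i, j, i', j'}"
    and chain: "book_pos i < book_pos i'" "book_pos i' < book_pos j" "book_pos j < book_pos j'"
  shows False
proof -
  have same_side: "r i < r c \<longleftrightarrow> r j < r c" "r i' < r c \<longleftrightarrow> r j' < r c"
    using ray_sightline_same_side[OF ray in_V(1,2)] ray_sightline_same_side[OF ray' in_V(3,4)]
      not_pivot by auto
  consider "r i < r c" | "r c < r i"
    using radius_neq_pivot in_V(1) not_pivot by blast
  then show False
  proof cases
    case 1
    then have "r j < r c" "r i' < r j"
      using same_side chain(2) book_pos_less_inside[of j i'] by auto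
    moreover from this have "r i < r i'" "r j' < r c"
      using chain(1) book_pos_less_inside[of i' i] same_side by auto
    moreover from this have "r j < r j'"
      using chain(3) book_pos_less_inside[of j' j] by auto
    ultimately show False
      using ray_sightlines_not_interleaved[OF ray ray' in_V(3,2)] by auto
  next
    case 2
    then have "r c < r i'" "r i' < r i"
      using chain(1) book_pos_less_outside[of i i'] by auto
    moreover from this have "r c < r j" "r j < r i'"
      using chain(2) book_pos_less_outside[of i' j] by auto
    moreover from this have "r j' < r j"
      using chain(3) book_pos_less_outside[of j j'] by auto
    ultimately show False
      using ray_sightlines_not_interleaved[of V r l j' i' s' j i s] ray ray' in_V(2,3)
      by (auto simp: ray_sightline_sym)
  qed
qed

lemma no_interleaving_from_ray_sightline:
  assumes ray: "ray_sightline V r l i j s"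
    and e': "ray_sightline V r l i' j' s' \<or> diameter_sightline V r l i' j' s'"
    and in_V: "i \<in> V" "j \<in> V" "i' \<in> V" "j' \<in> V"
    and not_pivot: "c \<notin> {i, j, i', j'}"
    and chain: "book_pos i < book_pos i'" "book_pos i' < book_pos j" "book_pos j < book_pos j'"
  shows False
  using e'
proof
  assume "ray_sightline V r l i' j' s'"
  then show False
    using no_interleaving_of_ray_sightlines[OF ray _ in_V not_pivot chain] by blast
next
  assume diam': "diameter_sightline V r l i' j' s'"
  have "r i' < r c" "r c < r j'"
    using diameter_sightline_crosses_pivot[OF diam' in_V(3,4)] not_pivot by auto
  moreover from this have "r i < r i'"
    using chain(1) book_pos_less_inside[of i' i] by auto
  moreover from this have "r i' < r j"
    using \<open>r i' < r c\<close> ray_sightline_same_side[OF ray in_V(1,2)] not_pivot chain(2)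
      book_pos_less_inside[of j i'] by auto
  ultimately show False
    using ray_diameter_sightlines_not_interleaved[OF ray diam' in_V(1,3)] by (cases "i = j'") auto
qed

lemma no_interleaving_from_diameter_sightline:
  assumes diam: "diameter_sightline V r l i j s"
    and e': "ray_sightline V r l i' j' s' \<or> diameter_sightline V r l i' j' s'"
    and in_V: "i \<in> V" "j \<in> V" "i' \<in> V" "j' \<in> V"
    and not_pivot: "c \<notin> {i, j, i', j'}"
    and chain: "book_pos i < book_pos i'" "book_pos i' < book_pos j" "book_pos j < book_pos j'"
  shows False
proof -
  have "r i < r c" "r c < r j"
    using diameter_sightline_crosses_pivot[OF diam in_V(1,2)] not_pivot by auto
  show False
    using e'
  proof (elim disjE)
    assume ray': "ray_sightline V r l i' j' s'"
    have "r c < r j'" "r j' < r j"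
      using \<open>r c < r j\<close> chain(3) book_pos_less_outside[of j j'] by auto
    moreover from this have "r c < r i'"
      using ray_sightline_same_side[OF ray' in_V(3,4)] radius_neq_pivot in_V(3) not_pivot by auto
    moreover from this have "r j < r i'"
      using chain(2) book_pos_less_outside[of i' j] by auto
    ultimately show False
      using diameter_ray_sightlines_not_interleaved[OF diam ray' in_V(2,4)] \<open>r i < r c\<close>
      by (cases "i = j'") auto
  next
    assume diam': "diameter_sightline V r l i' j' s'"
    have "r i' < r c" "r c < r j'"
      using diameter_sightline_crosses_pivot[OF diam' in_V(3,4)] not_pivot by auto
    then have "r i < r i'" "r j' < r j"
      using \<open>r c < r j\<close> chain(1,3) book_pos_less_inside[of i' i] book_pos_less_outside[of j j'] by auto
    then show False
      using diameter_sightlines_not_interleaved[OF diam diam' in_V(1,4)] \<open>r i < r c\<close> \<open>r c < r j'\<close>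
      by (cases "i = j'") auto
  qed
qed

lemma visible_not_interleaved:
  assumes vis: "visible V r l i j" "visible V r l i' j'"
    and in_V: "i \<in> V" "j \<in> V" "i' \<in> V" "j' \<in> V"
    and not_pivot: "c \<notin> {i, j, i', j'}"
    and chain: "book_pos i < book_pos i'" "book_pos i' < book_pos j" "book_pos j < book_pos j'"
  shows False
proof -
  obtain s where "ray_sightline V r l i j s \<or> diameter_sightline V r l i j s"
    using visible_oriented[OF vis(1) in_V(1,2)] not_pivot chain by force
  moreover obtain s' where "ray_sightline V r l i' j' s' \<or> diameter_sightline V r l i' j' s'"
    using visible_oriented[OF vis(2) in_V(3,4)] not_pivot chain by force
  ultimately show False
    using no_interleaving_from_ray_sightline no_interleaving_from_diameter_sightline
      in_V not_pivot chain by blast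
qed

lemma planar_graph_of_visible:
  assumes edges: "\<And>e. e \<in> E \<Longrightarrow> \<exists>i j. e = {i, j} \<and> i \<in> V \<and> j \<in> V \<and> i \<noteq> j \<and> visible V r l i j"
  shows "planar_graph V E"
proof (rule planar_graph_two_page_book[OF inj_on_book_pos, where page = "\<lambda>e. c \<in> e"])
  show "\<And>e. e \<in> E \<Longrightarrow> \<exists>u v. e = {u, v} \<and> u \<noteq> v \<and> u \<in> V \<and> v \<in> V"
    using edges by blast
  have visible_edge: "a \<in> V \<and> b \<in> V \<and> visible V r l a b" if "e \<in> E" "e = {a, b}" for e a b
    using edges[OF that(1)] that(2) by (metis doubleton_eq_iff visible_sym)
  fix e e' assume e: "e \<in> E" "e' \<in> E" and same_page: "(c \<in> e) = (c \<in> e')"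
  show "\<not> interleaved book_pos e e'"
  proof
    assume interleaving: "interleaved book_pos e e'"
    then have "c \<notin> e" "c \<notin> e'"
      using interleaved_disjoint same_page by blast+
    obtain a b a' b' where ab: "e = {a, b}" "e' = {a', b'}"
      and chain: "book_pos a < book_pos a'" "book_pos a' < book_pos b" "book_pos b < book_pos b'"
      using interleaving unfolding interleaved_def by blast
    show False
      using visible_not_interleaved[OF _ _ _ _ _ _ _ chain] visible_edge[OF e(1) ab(1)]
        visible_edge[OF e(2) ab(2)] \<open>c \<notin> e\<close> \<open>c \<notin> e'\<close> ab by blast
  qed
qed

end

lemma semi_arc_pivot_exists:
  assumes "finite V" "V \<noteq> {}" "inj_on r V" "\<And>k. k \<in> V \<Longrightarrow> l k < 2 * pi"
  obtains c L where "semi_arc_pivot V r l c L"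
proof -
  define L where "L = Max (l ` V)"
  define long where "long = {k \<in> V. L - pi \<le> l k}"
  have "L \<in> l ` V"
    using assms(1,2) by (simp add: L_def)
  then have "long \<noteq> {}" "finite long"
    using assms(1) by (auto simp: long_def)
  then obtain c where c: "c \<in> long" "r c = Min (r ` long)"
    by (metis (mono_tags, lifting) Min_in finite_imageI image_iff image_is_empty)
  have "semi_arc_pivot V r l c L"
  proof
    show "\<And>k. k \<in> V \<Longrightarrow> l k \<le> L"
      using assms(1) by (simp add: L_def)
    show "L < 2 * pi"
      using \<open>L \<in> l ` V\<close> assms(4) by blast
    fix k assume "k \<in> V" "r k < r c"
    then have "k \<notin> long"
      using c \<open>finite long\<close> by (metis Min_le finite_imageI image_eqI not_le)
    then show "l k < L - pi"
      using \<open>k \<in> V\<close> by (simp add: long_def)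
  qed (use assms(3) c in \<open>auto simp: long_def\<close>)
  then show thesis ..
qed

theorem mainTheorem1:
  fixes V :: "'v set" and r l :: "'v \<Rightarrow> real"
  assumes "semi_arc_vis_rep V r l"
  shows "planar_graph V (arc_vis_edges V r (\<lambda>_. 0) l)"
proof (cases "V = {}")
  case True
  then show ?thesis
    by (simp add: planar_graph_def arc_vis_edges_def)
next
  case False
  have "finite V" "\<And>k. k \<in> V \<Longrightarrow> l k < 2 * pi"
    using assms by (auto simp: semi_arc_vis_rep_def arc_vis_rep_def)
  then obtain c L where "semi_arc_pivot V r l c L"
    using semi_arc_pivot_exists semi_arc_radii_inj[OF assms] False by metis
  then show ?thesis
    using semi_arc_pivot.planar_graph_of_visible semi_arc_edge_visible[OF assms] by metis
qed

end
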